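(* Let $G=(V,E)$ be a connected $3$-uniform hypergraph. Then $\gamma(G)>0$ if and only if there is a partition $V=V_0\cup V_1\cup V_2$ of $V$ into three nonempty pairwise disjoint sets such that every edge $e\in E$ either satisfies $e\subseteq V_i$ for some $i\in\{0,1,2\}$, or satisfies $e\cap V_j\neq\emptyset$ for each $j=0,1,2$.
   Context: For a $3$-uniform hypergraph $G$ on vertices $v_1,\dots,v_n$, the adjacency tensor $\mathcal{A}(G)$ is the order-$3$, dimension-$n$ tensor with $a_{i_1i_2i_3}=\frac12$ if $\{v_{i_1},v_{i_2},v_{i_3}\}\in E$ and $0$ otherwise. Eigenvectors: $\mathcal{A}x^{2}=\lambda x^{[2]}$, $x\neq0$, $(\mathcal{A}x^2)_i=\sum_{j,k}a_{ijk}x_jx_k$, $x^{[2]}=(x_i^2)$; $\rho$ spectral radius. $\gamma(G)=\gamma(\mathcal{A}(G))$, the stabilizing dimension: the composition length (here: dimension over the field $\mathbb{Z}_3$) of the $\mathbb{Z}_3$-module of eigenvectors $y$ of $\mathcal{A}(G)$ for $\rho(\mathcal{A}(G))$ normalized by $y_1=1$ (no zero entries), with operation $y\circ\hat y=D_yD_{\hat y}v_p$, $D_y=\mathrm{diag}(y_i/|y_i|)$, $v_p$ the positive one. *)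

theory Defs
  imports "HOL-Analysis.Analysis"
begin

text \<open>A 3-uniform hypergraph on the vertex set {0..<n} (vertex v_i of the paper is i-1)
  with edge set E.\<close>
definition uniform3 :: "nat \<Rightarrow> nat set set \<Rightarrow> bool" where
  "uniform3 n E \<longleftrightarrow> (\<forall>e\<in>E. e \<subseteq> {0..<n} \<and> card e = 3)"

definition hg_connected :: "nat \<Rightarrow> nat set set \<Rightarrow> bool" where
  "hg_connected n E \<longleftrightarrow> 0 < n \<and>
     (\<forall>u<n. \<forall>v<n. (u, v) \<in> {(a, b). \<exists>e\<in>E. a \<in> e \<and> b \<in> e}\<^sup>*)"

definition adj_tensor :: "nat set set \<Rightarrow> nat \<Rightarrow> nat \<Rightarrow> nat \<Rightarrow> complex" where
  "adj_tensor E i j k = (if {i, j, k} \<in> E then 1/2 else 0)"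

definition tensor_apply :: "nat \<Rightarrow> nat set set \<Rightarrow> (nat \<Rightarrow> complex) \<Rightarrow> nat \<Rightarrow> complex" where
  "tensor_apply n E x i = (\<Sum>j<n. \<Sum>k<n. adj_tensor E i j k * x j * x k)"

definition eigenpair :: "nat \<Rightarrow> nat set set \<Rightarrow> complex \<Rightarrow> (nat \<Rightarrow> complex) \<Rightarrow> bool" where
  "eigenpair n E lam x \<longleftrightarrow> (\<forall>i\<ge>n. x i = 0) \<and> (\<exists>i<n. x i \<noteq> 0) \<and>
     (\<forall>i<n. tensor_apply n E x i = lam * (x i)\<^sup>2)"

definition spec_radius :: "nat \<Rightarrow> nat set set \<Rightarrow> real" where
  "spec_radius n E = Sup {cmod lam | lam. \<exists>x. eigenpair n E lam x}"

definition stab_set :: "nat \<Rightarrow> nat set set \<Rightarrow> (nat \<Rightarrow> complex) set" where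
  "stab_set n E = {y. eigenpair n E (complex_of_real (spec_radius n E)) y \<and> y 0 = 1 \<and>
      (\<forall>i<n. y i \<noteq> 0)}"

text \<open>Stabilizing dimension: the dimension over Z_3 of the Z_3-module stab_set, i.e.
  the k with card (stab_set) = 3^k (a finite Z_3-vector space of dimension k has 3^k elements).\<close>
definition stab_dim :: "nat \<Rightarrow> nat set set \<Rightarrow> nat" where
  "stab_dim n E = (LEAST k. card (stab_set n E) \<le> 3 ^ k)"

end

(*
  Maximizing the cubic form sum a_ijk x_i x_j x_k over nonnegative vectors with sum x_i^3 = 1
  gives x >= 0 with A x^2 = r x^[2]; second-order perturbations at two vanishing coordinates,
  together with connectivity, show x > 0. Comparing an arbitrary eigenvector y with x gives
  |lambda| <= r, so r is the spectral radius, and for lambda = r equality is forced throughout: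
  y = s x omega with unimodular phases satisfying omega_j omega_k = omega_i^2 on every edge
  {i, j, k}. Normalizing omega_0 = 1, connectivity makes every omega_i a cube root of unity
  zeta^(t_i), and the edge relations say t_i + t_j + t_k = 0 (mod 3), i.e. every edge is
  monochromatic or rainbow. So the normalized eigenvectors correspond bijectively to such
  labellings with t_0 = 0, and the stabilizing dimension is positive iff a non-constant one
  exists. Its label classes form the required partition, since connectivity forces a rainbow
  edge; conversely, labelling the parts of a partition by 0, 1, 2 gives such a labelling.
*)
theory Submission
  imports Defs
begin

section \<open>Adjacency forms of a 3-uniform hypergraph\<close>

definition adj :: "nat set set \<Rightarrow> nat \<Rightarrow> nat \<Rightarrow> nat \<Rightarrow> real" where
  "adj E i j k = (if {i, j, k} \<in> E then 1/2 else 0)"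

lemma adj_tensor_eq_adj: "adj_tensor E i j k = complex_of_real (adj E i j k)"
  by (simp add: adj_tensor_def adj_def)

lemma adj_nonneg: "0 \<le> adj E i j k"
  by (simp add: adj_def)

lemma adj_swap12: "adj E i j k = adj E j i k"
  by (simp add: adj_def insert_commute)

lemma adj_swap23: "adj E i j k = adj E i k j"
  by (simp add: adj_def insert_commute)

definition real_tensor_apply :: "nat \<Rightarrow> nat set set \<Rightarrow> (nat \<Rightarrow> real) \<Rightarrow> nat \<Rightarrow> real" where
  "real_tensor_apply n E x i = (\<Sum>j<n. \<Sum>k<n. adj E i j k * x j * x k)"

definition tensor_form ::
    "nat \<Rightarrow> nat set set \<Rightarrow> (nat \<Rightarrow> real) \<Rightarrow> (nat \<Rightarrow> real) \<Rightarrow> (nat \<Rightarrow> real) \<Rightarrow> real" where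
  "tensor_form n E u v w = (\<Sum>i<n. \<Sum>j<n. \<Sum>k<n. adj E i j k * u i * v j * w k)"

definition cube_sum :: "nat \<Rightarrow> (nat \<Rightarrow> real) \<Rightarrow> real" where
  "cube_sum n x = (\<Sum>i<n. x i ^ 3)"

definition unit_vec :: "nat \<Rightarrow> nat \<Rightarrow> real" where
  "unit_vec i = (\<lambda>j. if j = i then 1 else 0)"

lemma tensor_apply_of_real:
  "tensor_apply n E (\<lambda>j. complex_of_real (x j)) i = complex_of_real (real_tensor_apply n E x i)"
  by (simp add: tensor_apply_def real_tensor_apply_def adj_tensor_eq_adj)

lemma norm_tensor_apply_le:
  "cmod (tensor_apply n E y i) \<le> real_tensor_apply n E (\<lambda>j. cmod (y j)) i"
proof -
  have "cmod (tensor_apply n E y i) \<le> (\<Sum>j<n. \<Sum>k<n. cmod (adj_tensor E i j k * y j * y k))"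
    unfolding tensor_apply_def by (rule order_trans[OF norm_sum sum_mono[OF norm_sum]])
  also have "\<dots> = real_tensor_apply n E (\<lambda>j. cmod (y j)) i"
    by (simp add: real_tensor_apply_def adj_tensor_eq_adj norm_mult adj_nonneg)
  finally show ?thesis .
qed

lemma real_tensor_apply_nonneg: "(\<And>j. 0 \<le> x j) \<Longrightarrow> 0 \<le> real_tensor_apply n E x i"
  unfolding real_tensor_apply_def by (intro sum_nonneg mult_nonneg_nonneg adj_nonneg) auto

lemma real_tensor_apply_mono:
  assumes "\<And>j. j < n \<Longrightarrow> 0 \<le> x j" "\<And>j. j < n \<Longrightarrow> x j \<le> y j"
  shows "real_tensor_apply n E x i \<le> real_tensor_apply n E y i"
  unfolding real_tensor_apply_def
  by (intro sum_mono mult_mono mult_nonneg_nonneg adj_nonneg order_refl)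
     (auto intro: assms order_trans[OF assms(1) assms(2)])

lemma real_tensor_apply_scale:
  "real_tensor_apply n E (\<lambda>j. c * x j) i = c\<^sup>2 * real_tensor_apply n E x i"
  by (simp add: real_tensor_apply_def sum_distrib_left power2_eq_square mult_ac)

lemma tensor_form_swap12: "tensor_form n E u v w = tensor_form n E v u w"
  unfolding tensor_form_def by (subst sum.swap) (simp add: adj_swap12 mult_ac)

lemma tensor_form_swap23: "tensor_form n E u v w = tensor_form n E u w v"
  unfolding tensor_form_def by (rule sum.cong[OF refl], subst sum.swap) (simp add: adj_swap23 mult_ac)

lemma tensor_form_add1: "tensor_form n E (\<lambda>j. u j + u' j) v w = tensor_form n E u v w + tensor_form n E u' v w"
  unfolding tensor_form_def by (simp add: sum.distrib algebra_simps)

lemma tensor_form_add2: "tensor_form n E u (\<lambda>j. v j + v' j) w = tensor_form n E u v w + tensor_form n E u v' w"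
  unfolding tensor_form_def by (simp add: sum.distrib algebra_simps)

lemma tensor_form_nonneg:
  "(\<And>j. 0 \<le> u j) \<Longrightarrow> (\<And>j. 0 \<le> v j) \<Longrightarrow> (\<And>j. 0 \<le> w j) \<Longrightarrow> 0 \<le> tensor_form n E u v w"
  unfolding tensor_form_def by (intro sum_nonneg mult_nonneg_nonneg adj_nonneg) auto

lemma tensor_form_scale: "tensor_form n E (\<lambda>j. c * y j) (\<lambda>j. c * y j) (\<lambda>j. c * y j) = c ^ 3 * tensor_form n E y y y"
  unfolding tensor_form_def by (simp add: sum_distrib_left power3_eq_cube mult_ac)

lemma tensor_form_unit_vec:
  assumes "i < n"
  shows "tensor_form n E (unit_vec i) v w = (\<Sum>j<n. \<Sum>k<n. adj E i j k * v j * w k)"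
proof -
  have "tensor_form n E (unit_vec i) v w = (\<Sum>a<n. if a = i then \<Sum>j<n. \<Sum>k<n. adj E a j k * v j * w k else 0)"
    unfolding tensor_form_def unit_vec_def by (intro sum.cong) (auto simp: sum_distrib_left)
  then show ?thesis using assms by simp
qed

lemma tensor_form_unit_vec_apply:
  "i < n \<Longrightarrow> tensor_form n E (unit_vec i) x x = real_tensor_apply n E x i"
  by (simp add: tensor_form_unit_vec real_tensor_apply_def)

lemma tensor_form_unit_vec_unit_vec:
  assumes "i < n" "k < n"
  shows "tensor_form n E (unit_vec i) (unit_vec k) w = (\<Sum>c<n. adj E i k c * w c)"
proof -
  have "(\<Sum>j<n. \<Sum>c<n. adj E i j c * unit_vec k j * w c) = (\<Sum>j<n. if j = k then \<Sum>c<n. adj E i j c * w c else 0)"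
    unfolding unit_vec_def by (intro sum.cong) auto
  then show ?thesis using assms by (simp add: tensor_form_unit_vec)
qed

lemma tensor_form_expand:
  fixes x u :: "nat \<Rightarrow> real" and t :: real
  defines "y \<equiv> \<lambda>j. x j + t * u j"
  shows "tensor_form n E y y y = tensor_form n E x x x + 3 * t * tensor_form n E u x x
     + 3 * t\<^sup>2 * tensor_form n E u u x + t ^ 3 * tensor_form n E u u u"
proof -
  have "tensor_form n E y y y = tensor_form n E x x x
      + t * (tensor_form n E u x x + tensor_form n E x u x + tensor_form n E x x u)
      + t\<^sup>2 * (tensor_form n E u u x + tensor_form n E u x u + tensor_form n E x u u)
      + t ^ 3 * tensor_form n E u u u"
    unfolding y_def tensor_form_def
    by (simp add: sum.distrib sum_distrib_left algebra_simps power2_eq_square power3_eq_cube)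
  moreover have "tensor_form n E x u x = tensor_form n E u x x" "tensor_form n E x x u = tensor_form n E u x x"
    "tensor_form n E u x u = tensor_form n E u u x" "tensor_form n E x u u = tensor_form n E u u x"
    by (metis tensor_form_swap12 tensor_form_swap23)+
  ultimately show ?thesis by simp
qed

lemma double_sum_nonneg_eq_0:
  fixes f :: "nat \<Rightarrow> nat \<Rightarrow> real"
  assumes "\<And>j k. j < n \<Longrightarrow> k < n \<Longrightarrow> 0 \<le> f j k" "(\<Sum>j<n. \<Sum>k<n. f j k) = 0" "j < n" "k < n"
  shows "f j k = 0"
proof -
  have "(\<Sum>k<n. f j k) = 0"
    using assms(2,3) by (subst (asm) sum_nonneg_eq_0_iff) (auto intro!: sum_nonneg assms(1))
  then show ?thesis using assms(1,3,4) by (subst (asm) sum_nonneg_eq_0_iff) auto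
qed

lemma cube_sum_scale: "cube_sum n (\<lambda>j. c * y j) = c ^ 3 * cube_sum n y"
  by (simp add: cube_sum_def sum_distrib_left power_mult_distrib)

lemma cube_sum_add_unit_vec:
  assumes "i < n"
  shows "cube_sum n (\<lambda>j. y j + t * unit_vec i j) = cube_sum n y + ((y i + t) ^ 3 - y i ^ 3)"
proof -
  have "cube_sum n (\<lambda>j. y j + t * unit_vec i j)
      = (\<Sum>j<n. y j ^ 3 + (if j = i then (y i + t) ^ 3 - y i ^ 3 else 0))"
    unfolding cube_sum_def unit_vec_def by (intro sum.cong) auto
  then show ?thesis using assms by (simp add: sum.distrib cube_sum_def)
qed

locale hypergraph3 =
  fixes n :: nat and E :: "nat set set"
  assumes uniform: "uniform3 n E"
begin

lemma edge_through_vertex: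
  assumes "e \<in> E" "i \<in> e"
  obtains j k where "e = {i, j, k}" "i \<noteq> j" "j \<noteq> k" "i \<noteq> k" "i < n" "j < n" "k < n"
proof -
  have "card e = 3" "e \<subseteq> {0..<n}" using uniform assms by (auto simp: uniform3_def)
  then obtain p q w where e: "e = {p, q, w}" "p \<noteq> q" "q \<noteq> w" "p \<noteq> w"
    by (auto simp: card_3_iff)
  then have "\<exists>j k. e = {i, j, k} \<and> i \<noteq> j \<and> j \<noteq> k \<and> i \<noteq> k"
    using assms(2) by (auto simp: insert_commute)
  then show ?thesis using that \<open>e \<subseteq> {0..<n}\<close> by auto
qed

lemma edge_distinct:
  assumes "{i, j, k} \<in> E"
  shows "i \<noteq> j" "j \<noteq> k" "i \<noteq> k"
proof -
  have "card {i, j, k} = 3" using uniform assms by (auto simp: uniform3_def)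
  then show "i \<noteq> j" "j \<noteq> k" "i \<noteq> k" by (auto simp: card_insert_if split: if_splits)
qed

lemma edge_vertices_less:
  assumes "{i, j, k} \<in> E"
  shows "i < n" "j < n" "k < n"
  using uniform assms by (auto simp: uniform3_def)

lemma edge_nonempty: "e \<in> E \<Longrightarrow> e \<noteq> {}"
  using uniform by (auto simp: uniform3_def)

lemma edge_subset: "e \<in> E \<Longrightarrow> e \<subseteq> {..<n}"
  using uniform unfolding uniform3_def by fastforce

lemma ball_edges_iff: "(\<forall>e\<in>E. P e) \<longleftrightarrow> (\<forall>i j k. {i, j, k} \<in> E \<longrightarrow> P {i, j, k})"
proof (intro iffI allI ballI impI)
  fix e assume all: "\<forall>i j k. {i, j, k} \<in> E \<longrightarrow> P {i, j, k}" and e: "e \<in> E"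
  obtain i where "i \<in> e" using edge_nonempty[OF e] by blast
  then obtain j k where "e = {i, j, k}" using e by (elim edge_through_vertex)
  then show "P e" using all e by blast
qed simp

lemma edge_sum:
  "{i, j, k} \<in> E \<Longrightarrow> (\<Sum>l\<in>{i, j, k}. f l) = f i + f j + f k"
  using edge_distinct by (simp add: add.assoc)

lemma adj_diag: "adj E i i k = 0"
  using edge_distinct(1)[of i i k] by (auto simp: adj_def)

lemma tensor_form_unit_vec_diag:
  "i < n \<Longrightarrow> tensor_form n E (unit_vec i) (unit_vec i) w = 0"
  by (simp add: tensor_form_unit_vec_unit_vec adj_diag)

end

locale connected_hypergraph3 = hypergraph3 +
  assumes connected: "hg_connected n E"
begin

lemma n_pos: "0 < n"
  using connected by (simp add: hg_connected_def)

lemma propagate_along_edges: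
  assumes "a < n" "P a" "b < n"
    and step: "\<And>e u v. e \<in> E \<Longrightarrow> u \<in> e \<Longrightarrow> v \<in> e \<Longrightarrow> P u \<Longrightarrow> P v"
  shows "P b"
proof -
  have "(a, b) \<in> {(u, v). \<exists>e\<in>E. u \<in> e \<and> v \<in> e}\<^sup>*"
    using connected assms(1,3) by (simp add: hg_connected_def)
  then show ?thesis
    by (induction rule: rtrancl_induct) (use assms(2) step in blast)+
qed

end

section \<open>A positive eigenvector\<close>

lemma le_of_tendsto_at_right:
  fixes f :: "real \<Rightarrow> real"
  assumes "(f \<longlongrightarrow> L) (at_right 0)" "0 < d" "\<And>t. 0 < t \<Longrightarrow> t < d \<Longrightarrow> P \<le> f t"
  shows "P \<le> L"
proof (rule tendsto_le[OF trivial_limit_at_right_real assms(1) tendsto_const])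
  show "\<forall>\<^sub>F t in at_right 0. P \<le> f t"
    unfolding eventually_at_right_field using assms(2,3) by auto
qed

definition nonneg_cube_sphere :: "nat \<Rightarrow> (nat \<Rightarrow> real) set" where
  "nonneg_cube_sphere n = {y. (\<forall>j. 0 \<le> y j) \<and> (\<forall>j\<ge>n. y j = 0) \<and> cube_sum n y = 1}"

text \<open>\<open>x\<close> maximizes the cubic form on \<open>nonneg_cube_sphere n\<close>, with the maximality stated in
  homogeneous form.\<close>
locale cubic_maximizer = hypergraph3 +
  fixes x :: "nat \<Rightarrow> real" and r :: real
  assumes nonneg: "\<And>j. 0 \<le> x j"
    and supp: "\<And>j. n \<le> j \<Longrightarrow> x j = 0"
    and normalized: "cube_sum n x = 1"
    and max_value: "tensor_form n E x x x = r"
    and maximal: "\<And>y. (\<And>j. 0 \<le> y j) \<Longrightarrow> (\<And>j. n \<le> j \<Longrightarrow> y j = 0) \<Longrightarrow>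
                    tensor_form n E y y y \<le> r * cube_sum n y"
begin

lemma r_nonneg: "0 \<le> r"
  using tensor_form_nonneg[of x x x n E] nonneg max_value by simp

lemma perturbation_le:
  assumes "\<And>j. 0 \<le> x j + t * u j" "\<And>j. n \<le> j \<Longrightarrow> u j = 0"
  shows "3 * t * tensor_form n E u x x + 3 * t\<^sup>2 * tensor_form n E u u x + t ^ 3 * tensor_form n E u u u
    \<le> r * (cube_sum n (\<lambda>j. x j + t * u j) - 1)"
proof -
  have "tensor_form n E (\<lambda>j. x j + t * u j) (\<lambda>j. x j + t * u j) (\<lambda>j. x j + t * u j)
      \<le> r * cube_sum n (\<lambda>j. x j + t * u j)"
    by (rule maximal) (use assms supp in auto)
  then show ?thesis unfolding tensor_form_expand max_value by (simp add: algebra_simps)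
qed

lemma unit_vec_perturbation:
  assumes "i < n" "0 \<le> x i + t"
  shows "3 * t * real_tensor_apply n E x i \<le> r * ((x i + t) ^ 3 - x i ^ 3)"
proof -
  have "\<And>j. 0 \<le> x j + t * unit_vec i j"
    using assms(2) nonneg by (simp add: unit_vec_def)
  moreover have "\<And>j. n \<le> j \<Longrightarrow> unit_vec i j = 0"
    using assms(1) by (simp add: unit_vec_def)
  ultimately show ?thesis
    using perturbation_le[of t "unit_vec i"] assms(1)
    unfolding tensor_form_unit_vec_diag[OF assms(1)]
    by (simp add: tensor_form_unit_vec_apply cube_sum_add_unit_vec normalized)
qed

lemma real_tensor_apply_le:
  assumes "i < n"
  shows "real_tensor_apply n E x i \<le> r * (x i)\<^sup>2"
proof -
  have "3 * real_tensor_apply n E x i \<le> r * (3 * (x i)\<^sup>2 + 3 * x i * 0 + 0\<^sup>2)"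
  proof (rule le_of_tendsto_at_right[where d = 1])
    show "((\<lambda>t. r * (3 * (x i)\<^sup>2 + 3 * x i * t + t\<^sup>2)) \<longlongrightarrow> r * (3 * (x i)\<^sup>2 + 3 * x i * 0 + 0\<^sup>2)) (at_right 0)"
      by (intro tendsto_intros)
    fix t :: real assume t: "0 < t" "t < 1"
    have "t * (3 * real_tensor_apply n E x i) \<le> t * (r * (3 * (x i)\<^sup>2 + 3 * x i * t + t\<^sup>2))"
      using unit_vec_perturbation[OF assms, of t] t nonneg[of i]
      by (simp add: algebra_simps power2_eq_square power3_eq_cube)
    then show "3 * real_tensor_apply n E x i \<le> r * (3 * (x i)\<^sup>2 + 3 * x i * t + t\<^sup>2)"
      using t by simp
  qed simp
  then show ?thesis by simp
qed

lemma real_tensor_apply_ge: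
  assumes "i < n" "0 < x i"
  shows "r * (x i)\<^sup>2 \<le> real_tensor_apply n E x i"
proof -
  have "- (3 * real_tensor_apply n E x i) \<le> - (r * (3 * (x i)\<^sup>2 - 3 * x i * 0 + 0\<^sup>2))"
  proof (rule le_of_tendsto_at_right[where d = "x i"])
    show "((\<lambda>s. - (r * (3 * (x i)\<^sup>2 - 3 * x i * s + s\<^sup>2))) \<longlongrightarrow> - (r * (3 * (x i)\<^sup>2 - 3 * x i * 0 + 0\<^sup>2))) (at_right 0)"
      by (intro tendsto_intros)
    fix s :: real assume s: "0 < s" "s < x i"
    have "s * (r * (3 * (x i)\<^sup>2 - 3 * x i * s + s\<^sup>2)) \<le> s * (3 * real_tensor_apply n E x i)"
      using unit_vec_perturbation[OF assms(1), of "- s"] s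
      by (simp add: algebra_simps power2_eq_square power3_eq_cube)
    then show "- (3 * real_tensor_apply n E x i) \<le> - (r * (3 * (x i)\<^sup>2 - 3 * x i * s + s\<^sup>2))"
      using s by simp
  qed (use assms in simp)
  then show ?thesis by simp
qed

lemma real_tensor_apply_eq_0:
  "i < n \<Longrightarrow> x i = 0 \<Longrightarrow> real_tensor_apply n E x i = 0"
  using real_tensor_apply_le[of i] real_tensor_apply_nonneg[of x n E i] nonneg by simp

text \<open>Perturbing \<open>x\<close> in two vanishing coordinates, the first-order term vanishes, so the
  second-order term, which is this sum, must be non-positive.\<close>
lemma adj_sum_eq_0:
  assumes "i < n" "k < n" "i \<noteq> k" "x i = 0" "x k = 0"
  shows "(\<Sum>c<n. adj E i k c * x c) = 0"
proof -
  define u where "u = (\<lambda>j. unit_vec i j + unit_vec k j)"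
  define S where "S = (\<Sum>c<n. adj E i k c * x c)"
  have S_nonneg: "0 \<le> S"
    unfolding S_def using nonneg by (intro sum_nonneg mult_nonneg_nonneg adj_nonneg)
  have lin: "tensor_form n E u x x = 0"
    using assms by (simp add: u_def tensor_form_add1 tensor_form_unit_vec_apply real_tensor_apply_eq_0)
  have quad: "tensor_form n E u u x = 2 * S"
    using assms by (simp add: u_def tensor_form_add1 tensor_form_add2 tensor_form_unit_vec_diag
        tensor_form_unit_vec_unit_vec S_def adj_diag adj_swap12[of E k i])
  have cubic: "0 \<le> tensor_form n E u u u"
    by (intro tensor_form_nonneg) (simp_all add: u_def unit_vec_def)
  have "6 * S \<le> 0 * 0"
  proof (rule le_of_tendsto_at_right[where d = 1])
    show "((\<lambda>t. 2 * r * t) \<longlongrightarrow> 0 * 0) (at_right 0)"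
      by (auto intro!: tendsto_eq_intros)
    fix t :: real assume t: "0 < t" "t < 1"
    have u_ok: "\<And>j. 0 \<le> x j + t * u j" "\<And>j. n \<le> j \<Longrightarrow> u j = 0"
      using t assms(1,2) nonneg by (auto simp: u_def unit_vec_def)
    have "cube_sum n (\<lambda>j. x j + t * u j) = (\<Sum>j<n. x j ^ 3 + t ^ 3 * u j)"
      unfolding cube_sum_def by (rule sum.cong) (use assms in \<open>auto simp: u_def unit_vec_def\<close>)
    also have "\<dots> = 1 + 2 * t ^ 3"
      using assms normalized
      by (simp add: sum.distrib cube_sum_def u_def unit_vec_def sum_distrib_left[symmetric])
    finally have "3 * t\<^sup>2 * (2 * S) + t ^ 3 * tensor_form n E u u u \<le> r * (2 * t ^ 3)"
      using perturbation_le[OF u_ok] lin quad by simp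
    moreover have "0 \<le> t ^ 3 * tensor_form n E u u u" using cubic t by simp
    ultimately have "t\<^sup>2 * (6 * S) \<le> t\<^sup>2 * (2 * r * t)"
      by (simp add: power2_eq_square power3_eq_cube algebra_simps)
    then show "6 * S \<le> 2 * r * t" using t by simp
  qed simp
  then show ?thesis using S_nonneg by (simp add: S_def)
qed

lemma zero_spreads_along_edge:
  assumes "{a, j, k} \<in> E" "x a = 0"
  shows "x j = 0"
proof -
  have less: "a < n" "j < n" "k < n" and dist: "a \<noteq> j" "a \<noteq> k"
    using edge_vertices_less edge_distinct assms(1) by auto
  have adj: "adj E a j k = 1/2" "adj E a k j = 1/2"
    using assms(1) by (simp_all add: adj_def insert_commute)
  have "adj E a j k * x j * x k = 0"
    using real_tensor_apply_eq_0[OF less(1) assms(2)] less unfolding real_tensor_apply_def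
    by (intro double_sum_nonneg_eq_0[where f = "\<lambda>j k. adj E a j k * x j * x k"])
       (auto intro: mult_nonneg_nonneg adj_nonneg nonneg)
  then consider "x j = 0" | "x k = 0" using adj by auto
  then show ?thesis
  proof cases
    case 2
    have "(\<Sum>c<n. adj E a k c * x c) = 0" by (rule adj_sum_eq_0) (use less dist assms 2 in auto)
    then have "adj E a k j * x j = 0"
      using less by (subst (asm) sum_nonneg_eq_0_iff) (auto intro: mult_nonneg_nonneg adj_nonneg nonneg)
    then show ?thesis using adj by simp
  qed
qed

end

lemma compact_nonneg_cube_sphere: "compact (nonneg_cube_sphere n)"
proof -
  define S where "S = (\<lambda>j::nat. if j < n then {0..1::real} else {0})"
  have coord: "continuous_on A (\<lambda>y::nat \<Rightarrow> real. y j)" for A j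
    by (rule continuous_on_subset[OF continuous_on_product_coordinates]) auto
  have "compactin (product_topology (\<lambda>_. euclidean) UNIV) (PiE UNIV S)"
    by (subst compactin_PiE) (auto simp: S_def)
  then have "compact (PiE UNIV S)"
    by (metis euclidean_product_topology compactin_euclidean_iff)
  moreover have "closed {y. cube_sum n y = 1}"
    unfolding cube_sum_def by (intro closed_Collect_eq continuous_intros coord)
  moreover have "nonneg_cube_sphere n = PiE UNIV S \<inter> {y. cube_sum n y = 1}"
  proof (intro set_eqI iffI)
    fix y assume y: "y \<in> nonneg_cube_sphere n"
    have "y j \<le> 1" if "j < n" for j
    proof -
      have "y j ^ 3 \<le> cube_sum n y"
        unfolding cube_sum_def using y that by (intro member_le_sum) (auto simp: nonneg_cube_sphere_def)
      then show ?thesis using y by (simp add: power_le_one_iff nonneg_cube_sphere_def)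
    qed
    then show "y \<in> PiE UNIV S \<inter> {y. cube_sum n y = 1}"
      using y by (auto simp: S_def PiE_UNIV_domain not_less nonneg_cube_sphere_def)
  next
    fix y assume y: "y \<in> PiE UNIV S \<inter> {y. cube_sum n y = 1}"
    then have S: "y j \<in> S j" for j by (auto simp: PiE_UNIV_domain)
    have "0 \<le> y j \<and> (n \<le> j \<longrightarrow> y j = 0)" for j
      using S[of j] by (cases "j < n") (simp_all add: S_def)
    then show "y \<in> nonneg_cube_sphere n" using y by (auto simp: nonneg_cube_sphere_def)
  qed
  ultimately show ?thesis by (simp add: compact_Int_closed)
qed

lemma tensor_form_le_on_nonneg_cone:
  assumes max: "\<And>y. y \<in> nonneg_cube_sphere n \<Longrightarrow> tensor_form n E y y y \<le> r"
    and y: "\<And>j. 0 \<le> y j" "\<And>j. n \<le> j \<Longrightarrow> y j = 0"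
  shows "tensor_form n E y y y \<le> r * cube_sum n y"
proof (cases "cube_sum n y = 0")
  case True
  then have "y j = 0" if "j < n" for j
    using that y(1) unfolding cube_sum_def by (subst (asm) sum_nonneg_eq_0_iff) auto
  then have "tensor_form n E y y y = 0" by (simp add: tensor_form_def)
  then show ?thesis using True by simp
next
  case False
  then have pos: "0 < cube_sum n y"
    using y(1) unfolding cube_sum_def by (metis less_eq_real_def sum_nonneg zero_le_power)
  define c where "c = root 3 (cube_sum n y)"
  have c: "0 < c" "c ^ 3 = cube_sum n y" using pos by (simp_all add: c_def)
  have "(\<lambda>j. (1 / c) * y j) \<in> nonneg_cube_sphere n"
    using y c pos unfolding nonneg_cube_sphere_def mem_Collect_eq cube_sum_scale by (simp add: field_simps)
  then have "(1 / c) ^ 3 * tensor_form n E y y y \<le> r"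
    unfolding tensor_form_scale[symmetric] by (rule max)
  then show ?thesis using c pos by (simp add: field_simps)
qed

lemma (in hypergraph3) cubic_maximizer_exists:
  assumes "0 < n"
  shows "\<exists>x r. cubic_maximizer n E x r"
proof -
  have coord: "continuous_on A (\<lambda>y::nat \<Rightarrow> real. y j)" for A j
    by (rule continuous_on_subset[OF continuous_on_product_coordinates]) auto
  have "unit_vec 0 \<in> nonneg_cube_sphere n"
    using assms cube_sum_add_unit_vec[OF assms, of "\<lambda>_. 0" 1]
    by (simp add: nonneg_cube_sphere_def unit_vec_def cube_sum_def)
  moreover have "continuous_on (nonneg_cube_sphere n) (\<lambda>y. tensor_form n E y y y)"
    unfolding tensor_form_def by (intro continuous_intros coord)
  ultimately obtain x where x: "x \<in> nonneg_cube_sphere n"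
    and x_max: "\<And>y. y \<in> nonneg_cube_sphere n \<Longrightarrow> tensor_form n E y y y \<le> tensor_form n E x x x"
    using continuous_attains_sup[OF compact_nonneg_cube_sphere] by blast
  then have "cubic_maximizer n E x (tensor_form n E x x x)"
    using tensor_form_le_on_nonneg_cone[OF x_max]
    by unfold_locales (auto simp: nonneg_cube_sphere_def)
  then show ?thesis by blast
qed

context connected_hypergraph3
begin

lemma cubic_maximizer_pos:
  assumes "cubic_maximizer n E x r" "i < n"
  shows "0 < x i"
proof (rule ccontr)
  interpret cubic_maximizer n E x r by fact
  assume "\<not> 0 < x i"
  then have "x i = 0" using nonneg[of i] by simp
  have "x v = 0" if "v < n" for v
  proof (rule propagate_along_edges[where P = "\<lambda>v. x v = 0", OF \<open>i < n\<close> \<open>x i = 0\<close> that])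
    fix e u w assume "e \<in> E" "u \<in> e" "w \<in> e" "x u = 0"
    then obtain j k where "e = {u, j, k}" by (elim edge_through_vertex)
    then show "x w = 0"
      using \<open>e \<in> E\<close> \<open>w \<in> e\<close> \<open>x u = 0\<close> zero_spreads_along_edge[of u j k] zero_spreads_along_edge[of u k j]
      by (auto simp: insert_commute)
  qed
  then have "cube_sum n x = 0" by (simp add: cube_sum_def)
  then show False using normalized by simp
qed

end

locale perron_pair = connected_hypergraph3 +
  fixes x :: "nat \<Rightarrow> real" and r :: real
  assumes pos: "\<And>j. j < n \<Longrightarrow> 0 < x j"
    and supp: "\<And>j. n \<le> j \<Longrightarrow> x j = 0"
    and r_nonneg: "0 \<le> r"
    and eigen: "\<And>i. i < n \<Longrightarrow> real_tensor_apply n E x i = r * (x i)\<^sup>2"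

lemma (in connected_hypergraph3) perron_pair_exists: "\<exists>x r. perron_pair n E x r"
proof -
  obtain x r where "cubic_maximizer n E x r"
    using cubic_maximizer_exists n_pos by blast
  then interpret cubic_maximizer n E x r .
  have "\<And>j. j < n \<Longrightarrow> 0 < x j"
    using cubic_maximizer_pos \<open>cubic_maximizer n E x r\<close> by blast
  then have "perron_pair n E x r"
    using supp r_nonneg real_tensor_apply_le real_tensor_apply_ge
    by unfold_locales (auto intro: antisym)
  then show ?thesis by blast
qed

section \<open>Eigenvectors for the spectral radius\<close>

lemma tensor_apply_scaled_phases:
  assumes "\<And>j. j < n \<Longrightarrow> y j = complex_of_real (s * x j) * \<omega> j"
  shows "tensor_apply n E y i = complex_of_real (s\<^sup>2) *
    (\<Sum>j<n. \<Sum>k<n. complex_of_real (adj E i j k * x j * x k) * (\<omega> j * \<omega> k))"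
  unfolding tensor_apply_def adj_tensor_eq_adj
  by (simp add: assms sum_distrib_left power2_eq_square mult_ac)

lemma unit_weighted_sum_eq_1:
  fixes w :: "'a \<Rightarrow> real" and p :: "'a \<Rightarrow> complex"
  assumes "finite A" "\<And>a. a \<in> A \<Longrightarrow> 0 \<le> w a" "\<And>a. a \<in> A \<Longrightarrow> cmod (p a) = 1"
    and sum_eq: "(\<Sum>a\<in>A. complex_of_real (w a) * p a) = complex_of_real (\<Sum>a\<in>A. w a)"
    and "b \<in> A" "0 < w b"
  shows "p b = 1"
proof -
  have "(\<Sum>a\<in>A. w a * Re (p a)) = (\<Sum>a\<in>A. w a)"
    using arg_cong[OF sum_eq, of Re] by (simp add: Re_sum)
  then have "(\<Sum>a\<in>A. w a * (1 - Re (p a))) = 0"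
    by (simp add: right_diff_distrib sum_subtractf)
  moreover have "0 \<le> w a * (1 - Re (p a))" if "a \<in> A" for a
    using assms(2,3)[OF that] complex_Re_le_cmod[of "p a"] by simp
  ultimately have "w b * (1 - Re (p b)) = 0"
    using sum_nonneg_eq_0_iff[OF assms(1), of "\<lambda>a. w a * (1 - Re (p a))"] assms(5) by auto
  then have re: "Re (p b) = 1" using assms(6) by simp
  moreover have "(Re (p b))\<^sup>2 + (Im (p b))\<^sup>2 = 1"
    using assms(3)[OF assms(5)] cmod_power2[of "p b"] by simp
  ultimately have "Im (p b) = 0" by simp
  with re show ?thesis by (intro complex_eqI) simp_all
qed

context perron_pair
begin

lemma eigenpair_perron_vector: "eigenpair n E (complex_of_real r) (\<lambda>j. complex_of_real (x j))"
  unfolding eigenpair_def using supp pos[OF n_pos] eigen n_pos by (auto simp: tensor_apply_of_real)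

lemma max_modulus_ratio:
  assumes "eigenpair n E lam y"
  obtains i s where "i < n" "0 < s" "cmod (y i) = s * x i" "\<And>j. j < n \<Longrightarrow> cmod (y j) \<le> s * x j"
proof -
  define s where "s = Max ((\<lambda>j. cmod (y j) / x j) ` {..<n})"
  have "s \<in> (\<lambda>j. cmod (y j) / x j) ` {..<n}"
    unfolding s_def using n_pos by (intro Max_in) auto
  then obtain i where i: "i < n" "s = cmod (y i) / x i" by auto
  have le: "cmod (y j) / x j \<le> s" if "j < n" for j
    unfolding s_def using that by (intro Max_ge) auto
  obtain j where j: "j < n" "y j \<noteq> 0" using assms by (auto simp: eigenpair_def)
  have "0 < cmod (y j) / x j" using j pos[of j] by simp
  then have "0 < s" using le[OF j(1)] by linarith
  moreover have "cmod (y i) = s * x i" using i pos[of i] by simp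
  moreover have "cmod (y j) \<le> s * x j" if "j < n" for j
    using le[OF that] pos[OF that] by (simp add: divide_le_eq mult.commute)
  ultimately show ?thesis using that i(1) by blast
qed

lemma eigenvalue_norm_le:
  assumes "eigenpair n E lam y"
  shows "cmod lam \<le> r"
proof -
  obtain i s where i: "i < n" "0 < s" "cmod (y i) = s * x i" "\<And>j. j < n \<Longrightarrow> cmod (y j) \<le> s * x j"
    using max_modulus_ratio[OF assms] by blast
  have "cmod lam * (cmod (y i))\<^sup>2 = cmod (tensor_apply n E y i)"
    using assms i(1) by (simp add: eigenpair_def norm_mult norm_power)
  also have "\<dots> \<le> real_tensor_apply n E (\<lambda>j. cmod (y j)) i" by (rule norm_tensor_apply_le)
  also have "\<dots> \<le> real_tensor_apply n E (\<lambda>j. s * x j) i"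
    by (rule real_tensor_apply_mono) (use i in auto)
  also have "\<dots> = r * (cmod (y i))\<^sup>2"
    using eigen i by (simp add: real_tensor_apply_scale power_mult_distrib)
  finally show ?thesis using i pos[of i] by simp
qed

lemma spec_radius_eq: "spec_radius n E = r"
  unfolding spec_radius_def
proof (rule cSup_eq_maximum)
  show "r \<in> {cmod lam |lam. \<exists>y. eigenpair n E lam y}"
    using eigenpair_perron_vector r_nonneg by force
qed (use eigenvalue_norm_le in blast)

text \<open>Equality in the chain of estimates of the previous proof, at a vertex where the
  ratio is maximal, forces equality at the other vertices of each edge through it.\<close>
lemma max_modulus_ratio_along_edge:
  assumes y: "eigenpair n E (complex_of_real r) y" and "0 < s"
    and le: "\<And>j. j < n \<Longrightarrow> cmod (y j) \<le> s * x j"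
    and a: "cmod (y a) = s * x a" and edge: "{a, j, k} \<in> E"
  shows "cmod (y j) = s * x j"
proof -
  let ?z = "\<lambda>j. cmod (y j)"
  have less: "a < n" "j < n" "k < n" using edge_vertices_less[OF edge] by auto
  have "r * (?z a)\<^sup>2 = cmod (tensor_apply n E y a)"
    using y less r_nonneg by (simp add: eigenpair_def norm_mult norm_power)
  also have "\<dots> \<le> real_tensor_apply n E ?z a" by (rule norm_tensor_apply_le)
  finally have "real_tensor_apply n E (\<lambda>j. s * x j) a - real_tensor_apply n E ?z a \<le> 0"
    using eigen[OF less(1)] a by (simp add: real_tensor_apply_scale power_mult_distrib mult_ac)
  moreover have "0 \<le> real_tensor_apply n E (\<lambda>j. s * x j) a - real_tensor_apply n E ?z a"
    using real_tensor_apply_mono[of n ?z "\<lambda>j. s * x j"] le by simp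
  ultimately have "(\<Sum>j<n. \<Sum>k<n. adj E a j k * (s * x j * (s * x k) - ?z j * ?z k)) = 0"
    unfolding real_tensor_apply_def by (simp add: sum_subtractf[symmetric] algebra_simps)
  moreover have "0 \<le> adj E a j k * (s * x j * (s * x k) - ?z j * ?z k)" if "j < n" "k < n" for j k
    using le[OF that(1)] le[OF that(2)] adj_nonneg[of E a j k]
    by (intro mult_nonneg_nonneg) (auto intro!: mult_mono intro: order_trans[OF norm_ge_zero])
  ultimately have "adj E a j k * (s * x j * (s * x k) - ?z j * ?z k) = 0"
    using less by (intro double_sum_nonneg_eq_0) auto
  then have prod: "?z j * ?z k = s * x j * (s * x k)" using edge by (simp add: adj_def)
  show ?thesis
  proof (rule ccontr)
    assume "?z j \<noteq> s * x j"
    then have "?z j < s * x j" using le[OF less(2)] by simp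
    have "?z j * ?z k \<le> ?z j * (s * x k)"
      using le[OF less(3)] by (simp add: mult_left_mono)
    also have "\<dots> < s * x j * (s * x k)"
      using \<open>?z j < s * x j\<close> pos[OF less(3)] \<open>0 < s\<close> by (simp add: mult_strict_right_mono)
    finally show False using prod by simp
  qed
qed

lemma eigenvector_modulus:
  assumes y: "eigenpair n E (complex_of_real r) y"
  obtains s where "0 < s" "\<And>j. j < n \<Longrightarrow> cmod (y j) = s * x j"
proof -
  obtain i s where i: "i < n" "0 < s" "cmod (y i) = s * x i" "\<And>j. j < n \<Longrightarrow> cmod (y j) \<le> s * x j"
    using max_modulus_ratio[OF y] by blast
  have "cmod (y j) = s * x j" if "j < n" for j
  proof (rule propagate_along_edges[where P = "\<lambda>v. cmod (y v) = s * x v", OF i(1,3) that])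
    fix e u v assume e: "e \<in> E" "u \<in> e" "v \<in> e" and u: "cmod (y u) = s * x u"
    obtain j k where "e = {u, j, k}" using e by (elim edge_through_vertex)
    then have "{u, j, k} \<in> E" "{u, k, j} \<in> E" "v \<in> {u, j, k}" using e by (auto simp: insert_commute)
    then show "cmod (y v) = s * x v"
      using max_modulus_ratio_along_edge[OF y i(2,4) u, of j k]
        max_modulus_ratio_along_edge[OF y i(2,4) u, of k j] u by auto
  qed
  then show ?thesis using that i(2) by blast
qed

text \<open>Dividing the eigen-equation at \<open>i\<close> by \<open>\<omega> i\<^sup>2\<close> exhibits \<open>1\<close> as a weighted mean of the unit
  numbers \<open>\<omega> j * \<omega> k / \<omega> i\<^sup>2\<close>, which forces those of positive weight to equal \<open>1\<close>.\<close>
lemma phase_relation_on_edge: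
  assumes y: "eigenpair n E (complex_of_real r) y" and "0 < s"
    and y_eq: "\<And>j. j < n \<Longrightarrow> y j = complex_of_real (s * x j) * \<omega> j"
    and norm_\<omega>: "\<And>j. j < n \<Longrightarrow> cmod (\<omega> j) = 1"
    and edge: "{i, j, k} \<in> E"
  shows "\<omega> j * \<omega> k = (\<omega> i)\<^sup>2"
proof -
  define w where "w = (\<lambda>(j, k). adj E i j k * x j * x k)"
  define p where "p = (\<lambda>(j, k). \<omega> j * \<omega> k / (\<omega> i)\<^sup>2)"
  have less: "i < n" "j < n" "k < n" using edge_vertices_less[OF edge] by auto
  have "\<omega> i \<noteq> 0" using norm_\<omega>[OF less(1)] by auto
  have "complex_of_real (s\<^sup>2) *
      (\<Sum>j<n. \<Sum>k<n. complex_of_real (adj E i j k * x j * x k) * (\<omega> j * \<omega> k))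
    = complex_of_real (s\<^sup>2) * (complex_of_real (real_tensor_apply n E x i) * (\<omega> i)\<^sup>2)"
    using y less(1) eigen[OF less(1)]
    by (simp add: eigenpair_def tensor_apply_scaled_phases[OF y_eq] y_eq power_mult_distrib mult_ac)
  then have "(\<Sum>j<n. \<Sum>k<n. complex_of_real (adj E i j k * x j * x k) * (\<omega> j * \<omega> k)) / (\<omega> i)\<^sup>2
      = complex_of_real (real_tensor_apply n E x i)"
    using \<open>0 < s\<close> \<open>\<omega> i \<noteq> 0\<close> by simp
  then have "(\<Sum>j<n. \<Sum>k<n. complex_of_real (w (j, k)) * p (j, k))
      = complex_of_real (\<Sum>j<n. \<Sum>k<n. w (j, k))"
    by (simp add: w_def p_def real_tensor_apply_def sum_divide_distrib)
  then have "(\<Sum>jk\<in>{..<n} \<times> {..<n}. complex_of_real (w jk) * p jk)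
      = complex_of_real (\<Sum>jk\<in>{..<n} \<times> {..<n}. w jk)"
    by (simp add: sum.cartesian_product')
  then have "p (j, k) = 1"
  proof (rule unit_weighted_sum_eq_1[rotated 3])
    show "0 < w (j, k)" using edge less pos by (simp add: w_def adj_def)
    show "\<And>jk. jk \<in> {..<n} \<times> {..<n} \<Longrightarrow> cmod (p jk) = 1"
      using norm_\<omega> less(1) by (auto simp: p_def norm_mult norm_divide norm_power)
    show "\<And>jk. jk \<in> {..<n} \<times> {..<n} \<Longrightarrow> 0 \<le> w jk"
      using pos by (auto simp: w_def adj_nonneg less_imp_le)
  qed (use less in auto)
  then show ?thesis using \<open>\<omega> i \<noteq> 0\<close> by (simp add: p_def)
qed

lemma eigenvector_phases:
  assumes y: "eigenpair n E (complex_of_real r) y"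
  obtains s \<omega> where "0 < s" "\<And>j. j < n \<Longrightarrow> cmod (\<omega> j) = 1"
    "\<And>j. j < n \<Longrightarrow> y j = complex_of_real (s * x j) * \<omega> j"
    "\<And>i j k. {i, j, k} \<in> E \<Longrightarrow> \<omega> j * \<omega> k = (\<omega> i)\<^sup>2"
proof -
  obtain s where s: "0 < s" "\<And>j. j < n \<Longrightarrow> cmod (y j) = s * x j"
    using eigenvector_modulus[OF y] by blast
  define \<omega> where "\<omega> j = y j / complex_of_real (s * x j)" for j
  have y_eq: "y j = complex_of_real (s * x j) * \<omega> j" if "j < n" for j
    using s(1) pos[OF that] by (simp add: \<omega>_def)
  have norm_\<omega>: "cmod (\<omega> j) = 1" if "j < n" for j
    using s pos[OF that] that by (simp add: \<omega>_def norm_divide norm_mult)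
  show ?thesis
    using that s(1) norm_\<omega> y_eq phase_relation_on_edge[OF y s(1) y_eq norm_\<omega>] by blast
qed

lemma eigen_equation_of_phases:
  assumes phases: "\<And>i j k. {i, j, k} \<in> E \<Longrightarrow> \<omega> j * \<omega> k = (\<omega> i)\<^sup>2"
    and y: "\<And>j. j < n \<Longrightarrow> y j = complex_of_real (s * x j) * \<omega> j" and "i < n"
  shows "tensor_apply n E y i = complex_of_real r * (y i)\<^sup>2"
proof -
  have "(\<Sum>j<n. \<Sum>k<n. complex_of_real (adj E i j k * x j * x k) * (\<omega> j * \<omega> k))
      = (\<Sum>j<n. \<Sum>k<n. complex_of_real (adj E i j k * x j * x k) * (\<omega> i)\<^sup>2)"
    by (intro sum.cong refl) (simp add: adj_def phases)
  also have "\<dots> = complex_of_real (real_tensor_apply n E x i) * (\<omega> i)\<^sup>2"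
    by (simp add: real_tensor_apply_def sum_distrib_right)
  finally show ?thesis
    using eigen[OF \<open>i < n\<close>] y[OF \<open>i < n\<close>]
    by (simp add: tensor_apply_scaled_phases[OF y] power_mult_distrib mult_ac)
qed

end

section \<open>Zero-sum labellings and tripartitions\<close>

lemma mod3_sum_eq_0_iff:
  fixes a b c :: nat
  assumes "a < 3" "b < 3" "c < 3"
  shows "(a + b + c) mod 3 = 0 \<longleftrightarrow> (\<exists>m. {a, b, c} = {m}) \<or> {a, b, c} = {..<3}"
proof -
  have "a = 0 \<or> a = 1 \<or> a = 2" "b = 0 \<or> b = 1 \<or> b = 2" "c = 0 \<or> c = 1 \<or> c = 2"
    using assms by auto
  then have "(a + b + c) mod 3 = 0 \<longleftrightarrow> (a = b \<and> b = c) \<or> (a \<noteq> b \<and> b \<noteq> c \<and> a \<noteq> c)"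
    by (elim disjE) simp_all
  moreover have "(a = b \<and> b = c) \<longleftrightarrow> (\<exists>m. {a, b, c} = {m})"
    by (auto simp: insert_eq_iff doubleton_eq_iff)
  moreover have "(a \<noteq> b \<and> b \<noteq> c \<and> a \<noteq> c) \<longleftrightarrow> {a, b, c} = {..<3}"
  proof
    assume "a \<noteq> b \<and> b \<noteq> c \<and> a \<noteq> c"
    then show "{a, b, c} = {..<3}" using assms by (intro card_subset_eq) auto
  next
    assume "{a, b, c} = {..<3}"
    then have "card {a, b, c} = 3" by simp
    then show "a \<noteq> b \<and> b \<noteq> c \<and> a \<noteq> c" by (auto simp: card_insert_if split: if_splits)
  qed
  ultimately show ?thesis by (simp only:)
qed

text \<open>Labels \<open>0, 1, 2\<close> represent \<open>\<int>\<^sub>3\<close>; they are fixed to \<open>0\<close> outside the vertex set, so that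
  distinct labellings give distinct eigenvectors.\<close>
definition zero_sum_labelling :: "nat \<Rightarrow> nat set set \<Rightarrow> (nat \<Rightarrow> nat) \<Rightarrow> bool" where
  "zero_sum_labelling n E t \<longleftrightarrow>
     (\<forall>j. t j < 3) \<and> (\<forall>j\<ge>n. t j = 0) \<and> (\<forall>e\<in>E. (\<Sum>j\<in>e. t j) mod 3 = 0)"

lemma finite_zero_sum_labellings: "finite {t. zero_sum_labelling n E t}"
proof (rule finite_subset)
  show "{t. zero_sum_labelling n E t} \<subseteq>
      {t. \<forall>j. (j \<in> {..<n} \<longrightarrow> t j \<in> {..<3}) \<and> (j \<notin> {..<n} \<longrightarrow> t j = 0)}"
    by (auto simp: zero_sum_labelling_def)
qed (rule finite_set_of_finite_funs; simp)

definition tripartition :: "nat \<Rightarrow> nat set set \<Rightarrow> nat set \<Rightarrow> nat set \<Rightarrow> nat set \<Rightarrow> bool" where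
  "tripartition n E V0 V1 V2 \<longleftrightarrow> V0 \<noteq> {} \<and> V1 \<noteq> {} \<and> V2 \<noteq> {} \<and>
     V0 \<inter> V1 = {} \<and> V0 \<inter> V2 = {} \<and> V1 \<inter> V2 = {} \<and> V0 \<union> V1 \<union> V2 = {0..<n} \<and>
     (\<forall>e\<in>E. (e \<subseteq> V0 \<or> e \<subseteq> V1 \<or> e \<subseteq> V2) \<or> (e \<inter> V0 \<noteq> {} \<and> e \<inter> V1 \<noteq> {} \<and> e \<inter> V2 \<noteq> {}))"

context hypergraph3
begin

lemma zero_sum_labelling_iff:
  "zero_sum_labelling n E t \<longleftrightarrow> (\<forall>j. t j < 3) \<and> (\<forall>j\<ge>n. t j = 0) \<and>
     (\<forall>i j k. {i, j, k} \<in> E \<longrightarrow> (t i + t j + t k) mod 3 = 0)"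
  unfolding zero_sum_labelling_def ball_edges_iff by (metis edge_sum)

lemma zero_sum_labelling_shift:
  assumes "zero_sum_labelling n E t"
  shows "zero_sum_labelling n E (\<lambda>j. if j < n then (t j + c) mod 3 else 0)"
proof -
  have "((t i + c) mod 3 + (t j + c) mod 3 + (t k + c) mod 3) mod 3 = 0" if "{i, j, k} \<in> E" for i j k
  proof -
    have "(t i + t j + t k) mod 3 = 0" using assms that by (simp add: zero_sum_labelling_iff)
    then show ?thesis by presburger
  qed
  then show ?thesis using edge_vertices_less by (simp add: zero_sum_labelling_iff)
qed

lemma zero_sum_labelling_iff_edge_types:
  assumes "\<forall>j. t j < 3" "\<forall>j\<ge>n. t j = 0"
  shows "zero_sum_labelling n E t \<longleftrightarrow> (\<forall>e\<in>E. (\<exists>m. t ` e = {m}) \<or> t ` e = {..<3})"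
proof -
  have "(t i + t j + t k) mod 3 = 0 \<longleftrightarrow> (\<exists>m. t ` {i, j, k} = {m}) \<or> t ` {i, j, k} = {..<3}" for i j k
    using mod3_sum_eq_0_iff[of "t i" "t j" "t k"] assms(1) by simp
  then show ?thesis using assms by (simp add: zero_sum_labelling_iff ball_edges_iff)
qed

lemma edge_type_of_tripartition:
  fixes t :: "nat \<Rightarrow> nat"
  assumes "tripartition n E V0 V1 V2" "e \<in> E" "\<forall>v. t v < 3"
    and labels: "\<And>v. v \<in> V0 \<Longrightarrow> t v = 0" "\<And>v. v \<in> V1 \<Longrightarrow> t v = 1" "\<And>v. v \<in> V2 \<Longrightarrow> t v = 2"
  shows "(\<exists>m. t ` e = {m}) \<or> t ` e = {..<3}"
proof -
  have "e \<noteq> {}" using assms(2) by (rule edge_nonempty)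
  from assms(1,2) consider "e \<subseteq> V0" | "e \<subseteq> V1" | "e \<subseteq> V2"
    | "e \<inter> V0 \<noteq> {}" "e \<inter> V1 \<noteq> {}" "e \<inter> V2 \<noteq> {}"
    unfolding tripartition_def by blast
  then show ?thesis
  proof cases
    case 1
    then have "t ` e = {0}" using labels(1) \<open>e \<noteq> {}\<close> by force
    then show ?thesis by blast
  next
    case 2
    then have "t ` e = {1}" using labels(2) \<open>e \<noteq> {}\<close> by force
    then show ?thesis by blast
  next
    case 3
    then have "t ` e = {2}" using labels(3) \<open>e \<noteq> {}\<close> by force
    then show ?thesis by blast
  next
    case 4
    then have "0 \<in> t ` e" "1 \<in> t ` e" "2 \<in> t ` e"
      using labels by (metis IntE ex_in_conv image_eqI)+
    moreover have "{..<3::nat} = {0, 1, 2}" by auto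
    ultimately have "{..<3} \<subseteq> t ` e" by simp
    moreover have "t ` e \<subseteq> {..<3}" using assms(3) by auto
    ultimately show ?thesis by (simp add: subset_antisym)
  qed
qed

lemma labelling_of_tripartition:
  assumes "tripartition n E V0 V1 V2"
  shows "\<exists>t. zero_sum_labelling n E t \<and> (\<exists>j<n. t j \<noteq> t 0)"
proof -
  define t where "t j = (if j \<in> V1 then 1 else if j \<in> V2 then 2 else 0 :: nat)" for j
  have parts: "V0 \<union> V1 \<union> V2 = {0..<n}" "V0 \<inter> V1 = {}" "V0 \<inter> V2 = {}" "V1 \<inter> V2 = {}"
    using assms by (simp_all add: tripartition_def)
  then have sub: "V0 \<subseteq> {..<n}" "V1 \<subseteq> {..<n}" "V2 \<subseteq> {..<n}" by auto
  have t0: "t v = 0" if "v \<in> V0" for v using that parts(2,3) by (auto simp: t_def)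
  have t1: "t v = 1" if "v \<in> V1" for v using that by (simp add: t_def)
  have t2: "t v = 2" if "v \<in> V2" for v using that parts(4) by (auto simp: t_def)
  have t3: "\<forall>j. t j < 3" by (simp add: t_def)
  moreover have "\<forall>j\<ge>n. t j = 0" using sub by (auto simp: t_def)
  ultimately have "zero_sum_labelling n E t"
    using edge_type_of_tripartition[OF assms _ t3 t0 t1 t2] by (simp add: zero_sum_labelling_iff_edge_types)
  moreover obtain v0 v1 where "v0 \<in> V0" "v1 \<in> V1" using assms by (auto simp: tripartition_def)
  then have "v0 < n" "v1 < n" "t v0 \<noteq> t v1" using sub t0 t1 by auto
  then have "\<exists>j<n. t j \<noteq> t 0" by metis
  ultimately show ?thesis by blast
qed

end

context connected_hypergraph3
begin

text \<open>Otherwise every edge would be monochromatic and, by connectivity, the labelling constant.\<close>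
lemma rainbow_edge_exists:
  assumes t: "zero_sum_labelling n E t" and j: "j < n" "t j \<noteq> t 0"
  shows "\<exists>e\<in>E. t ` e = {..<3}"
proof (rule ccontr)
  assume "\<not> (\<exists>e\<in>E. t ` e = {..<3})"
  then have mono: "\<exists>m. t ` e = {m}" if "e \<in> E" for e
    using t that zero_sum_labelling_iff_edge_types[of t] by (auto simp: zero_sum_labelling_def)
  have "t v = t 0" if "v < n" for v
  proof (rule propagate_along_edges[where P = "\<lambda>v. t v = t 0", OF n_pos refl that])
    fix e u w assume "e \<in> E" "u \<in> e" "w \<in> e" "t u = t 0"
    then obtain m where "t ` e = {m}" using mono by blast
    moreover have "t u \<in> t ` e" "t w \<in> t ` e" by (simp_all add: \<open>u \<in> e\<close> \<open>w \<in> e\<close>)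
    ultimately show "t w = t 0" using \<open>t u = t 0\<close> by simp
  qed
  then show False using j by blast
qed

text \<open>The label classes are the parts; a rainbow edge meets all of them.\<close>
lemma tripartition_of_labelling:
  assumes t: "zero_sum_labelling n E t" and j: "j < n" "t j \<noteq> t 0"
  shows "\<exists>V0 V1 V2. tripartition n E V0 V1 V2"
proof -
  define V where "V m = {v. v < n \<and> t v = m}" for m
  have t3: "\<forall>v. t v < 3" and supp: "\<forall>v\<ge>n. t v = 0"
    using t by (simp_all add: zero_sum_labelling_def)
  have types: "(\<exists>m. t ` e = {m}) \<or> t ` e = {..<3}" if "e \<in> E" for e
    using t that zero_sum_labelling_iff_edge_types[OF t3 supp] by blast
  have meets: "e \<inter> V m \<noteq> {}" if "e \<in> E" "t ` e = {..<3}" "m < 3" for e m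
  proof -
    have "m \<in> t ` e" using that(2,3) by simp
    then obtain v where "v \<in> e" "t v = m" by blast
    then show ?thesis using edge_subset[OF that(1)] by (auto simp: V_def)
  qed
  have labels: "m < 3 \<Longrightarrow> m = 0 \<or> m = 1 \<or> m = 2" for m :: nat by auto
  obtain e0 where "e0 \<in> E" "t ` e0 = {..<3}" using rainbow_edge_exists[OF assms] by blast
  then have nonempty: "V m \<noteq> {}" if "m < 3" for m using meets that by blast
  have "(e \<subseteq> V 0 \<or> e \<subseteq> V 1 \<or> e \<subseteq> V 2) \<or>
      (e \<inter> V 0 \<noteq> {} \<and> e \<inter> V 1 \<noteq> {} \<and> e \<inter> V 2 \<noteq> {})" if e: "e \<in> E" for e
    using types[OF e]
  proof
    assume "\<exists>m. t ` e = {m}"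
    then obtain m where m: "t ` e = {m}" by blast
    then have sub: "e \<subseteq> V m" using edge_subset[OF e] by (auto simp: V_def)
    have "m \<in> t ` e" using m by simp
    then have "m < 3" using t3 by auto
    then show ?thesis using labels[of m] sub by auto
  qed (simp add: meets[OF e])
  moreover have "V 0 \<union> V 1 \<union> V 2 = {0..<n}" using t3 labels by (auto simp: V_def)
  moreover have "V 0 \<inter> V 1 = {}" "V 0 \<inter> V 2 = {}" "V 1 \<inter> V 2 = {}" by (auto simp: V_def)
  ultimately have "tripartition n E (V 0) (V 1) (V 2)"
    using nonempty unfolding tripartition_def by simp
  then show ?thesis by blast
qed

lemma nonconstant_labelling_iff_tripartition:
  "(\<exists>t. zero_sum_labelling n E t \<and> (\<exists>j<n. t j \<noteq> t 0)) \<longleftrightarrow> (\<exists>V0 V1 V2. tripartition n E V0 V1 V2)"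
  using tripartition_of_labelling labelling_of_tripartition by blast

lemma nonconstant_labelling_iff_normalized:
  "(\<exists>t. zero_sum_labelling n E t \<and> t 0 = 0 \<and> t \<noteq> (\<lambda>_. 0)) \<longleftrightarrow>
   (\<exists>t. zero_sum_labelling n E t \<and> (\<exists>j<n. t j \<noteq> t 0))"
proof
  assume "\<exists>t. zero_sum_labelling n E t \<and> t 0 = 0 \<and> t \<noteq> (\<lambda>_. 0)"
  then obtain t j where t: "zero_sum_labelling n E t" "t 0 = 0" "t j \<noteq> 0"
    by (auto simp: fun_eq_iff)
  then have "j < n" by (meson not_less zero_sum_labelling_def)
  then show "\<exists>t. zero_sum_labelling n E t \<and> (\<exists>j<n. t j \<noteq> t 0)"
    using t by (intro exI[of _ t]) auto
next
  assume "\<exists>t. zero_sum_labelling n E t \<and> (\<exists>j<n. t j \<noteq> t 0)"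
  then obtain t j where t: "zero_sum_labelling n E t" "j < n" "t j \<noteq> t 0" by blast
  define t' where "t' v = (if v < n then (t v + (3 - t 0)) mod 3 else 0)" for v
  have "t 0 < 3" "t j < 3" using t(1) by (simp_all add: zero_sum_labelling_def)
  then have "t' 0 = 0" "t' j \<noteq> 0" using n_pos t(2,3) unfolding t'_def by presburger+
  moreover have "zero_sum_labelling n E t'"
    unfolding t'_def by (rule zero_sum_labelling_shift[OF t(1)])
  ultimately show "\<exists>t. zero_sum_labelling n E t \<and> t 0 = 0 \<and> t \<noteq> (\<lambda>_. 0)" by auto
qed

end

section \<open>Normalized eigenvectors as labellings\<close>

definition zeta :: complex where
  "zeta = exp (2 * complex_of_real pi * \<i> / 3)"

lemma zeta_pow: "zeta ^ k = exp (2 * complex_of_real pi * \<i> * of_nat k / of_nat 3)"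
  unfolding zeta_def exp_of_nat_mult[symmetric] by (simp add: mult_ac)

lemma zeta_pow_eq_iff: "zeta ^ a = zeta ^ b \<longleftrightarrow> a mod 3 = b mod 3"
  unfolding zeta_pow by (rule complex_root_unity_eq) simp

lemma zeta_pow_nonzero: "zeta ^ k \<noteq> 0"
  by (simp add: zeta_def)

lemma cube_root_unity_eq_zeta_pow:
  assumes "w ^ 3 = 1"
  obtains k where "k < 3" "w = zeta ^ k"
  using assms complex_roots_unity[of 3] by (auto simp: zeta_pow)

lemma zeta_pow_phase_iff: "zeta ^ b * zeta ^ c = (zeta ^ a)\<^sup>2 \<longleftrightarrow> (a + b + c) mod 3 = 0"
proof -
  have "zeta ^ b * zeta ^ c = (zeta ^ a)\<^sup>2 \<longleftrightarrow> (b + c) mod 3 = (2 * a) mod 3"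
    by (simp add: power_add[symmetric] power_mult[symmetric] mult.commute zeta_pow_eq_iff)
  also have "\<dots> \<longleftrightarrow> (a + b + c) mod 3 = 0" by presburger
  finally show ?thesis .
qed

lemma cube_eq_of_phase_relations:
  fixes a b c :: "'a :: comm_ring_1"
  assumes "b * c = a\<^sup>2" "a * c = b\<^sup>2"
  shows "b ^ 3 = a ^ 3"
proof -
  have "b ^ 3 = b * b\<^sup>2" by (simp add: power3_eq_cube power2_eq_square)
  also have "\<dots> = b * (a * c)" using assms(2) by simp
  also have "\<dots> = a * (b * c)" by (simp add: mult_ac)
  also have "\<dots> = a ^ 3" using assms(1) by (simp add: power3_eq_cube power2_eq_square)
  finally show ?thesis .
qed

context connected_hypergraph3
begin

lemma edge_phases_cube_roots:
  assumes "\<omega> 0 = 1" and phases: "\<And>i j k. {i, j, k} \<in> E \<Longrightarrow> \<omega> j * \<omega> k = (\<omega> i)\<^sup>2" and "v < n"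
  shows "\<omega> v ^ 3 = (1 :: 'a :: comm_ring_1)"
proof (rule propagate_along_edges[where P = "\<lambda>v. \<omega> v ^ 3 = 1", OF n_pos _ \<open>v < n\<close>])
  show "\<omega> 0 ^ 3 = 1" using assms(1) by simp
  fix e u w assume e: "e \<in> E" "u \<in> e" "w \<in> e" and u: "\<omega> u ^ 3 = 1"
  obtain j k where e_eq: "e = {u, j, k}" using e by (elim edge_through_vertex)
  then have "{u, j, k} \<in> E" "{u, k, j} \<in> E" "{j, u, k} \<in> E" "{k, u, j} \<in> E"
    using e(1) by (simp_all add: insert_commute)
  then have "\<omega> j ^ 3 = \<omega> u ^ 3" "\<omega> k ^ 3 = \<omega> u ^ 3"
    using phases by (blast intro: cube_eq_of_phase_relations)+
  then show "\<omega> w ^ 3 = 1" using e(3) e_eq u by auto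
qed

lemma zeta_labelling_of_phases:
  assumes \<omega>0: "\<omega> 0 = 1" and phases: "\<And>i j k. {i, j, k} \<in> E \<Longrightarrow> \<omega> j * \<omega> k = (\<omega> i)\<^sup>2"
  obtains t where "zero_sum_labelling n E t" "t 0 = 0" "\<And>j. j < n \<Longrightarrow> \<omega> j = zeta ^ t j"
proof -
  define t where "t j = (if j < n then SOME k. k < 3 \<and> \<omega> j = zeta ^ k else 0)" for j
  have t: "t j < 3 \<and> \<omega> j = zeta ^ t j" if "j < n" for j
  proof -
    obtain k where "k < 3" "\<omega> j = zeta ^ k"
      using edge_phases_cube_roots[of \<omega>, OF \<omega>0 phases \<open>j < n\<close>] by (rule cube_root_unity_eq_zeta_pow)
    then have "\<exists>k. k < 3 \<and> \<omega> j = zeta ^ k" by blast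
    then have "(SOME k. k < 3 \<and> \<omega> j = zeta ^ k) < 3 \<and> \<omega> j = zeta ^ (SOME k. k < 3 \<and> \<omega> j = zeta ^ k)"
      by (rule someI_ex)
    then show ?thesis using that by (simp add: t_def)
  qed
  have "zero_sum_labelling n E t"
    unfolding zero_sum_labelling_iff
  proof (intro conjI allI impI)
    fix i j k assume e: "{i, j, k} \<in> E"
    then have "zeta ^ t j * zeta ^ t k = (zeta ^ t i)\<^sup>2"
      using phases[OF e] t edge_vertices_less[OF e] by simp
    then show "(t i + t j + t k) mod 3 = 0" by (simp add: zeta_pow_phase_iff)
  next
    show "t j < 3" for j using t[of j] by (cases "j < n") (simp_all add: t_def)
  qed (simp add: t_def)
  moreover have "t 0 = 0"
    using t[OF n_pos] \<omega>0 zeta_pow_eq_iff[of "t 0" 0] by simp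
  ultimately show ?thesis using that t by blast
qed

end

context perron_pair
begin

definition phase_vector :: "(nat \<Rightarrow> nat) \<Rightarrow> nat \<Rightarrow> complex" where
  "phase_vector t j = (if j < n then complex_of_real (x j / x 0) * zeta ^ t j else 0)"

lemma phase_vector_in_stab_set:
  assumes "zero_sum_labelling n E t" "t 0 = 0"
  shows "phase_vector t \<in> stab_set n E"
proof -
  have phases: "zeta ^ t j * zeta ^ t k = (zeta ^ t i)\<^sup>2" if "{i, j, k} \<in> E" for i j k
    using assms(1) that by (simp add: zero_sum_labelling_iff zeta_pow_phase_iff)
  have "tensor_apply n E (phase_vector t) i = complex_of_real r * (phase_vector t i)\<^sup>2" if "i < n" for i
    using that by (intro eigen_equation_of_phases[where \<omega> = "\<lambda>j. zeta ^ t j" and s = "1 / x 0"])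
      (simp_all add: phases phase_vector_def)
  moreover have "phase_vector t 0 = 1"
    using n_pos pos[OF n_pos] assms(2) by (simp add: phase_vector_def)
  moreover have "phase_vector t j \<noteq> 0" if "j < n" for j
    using that pos[OF that] pos[OF n_pos] zeta_pow_nonzero by (simp add: phase_vector_def)
  ultimately show ?thesis
    using n_pos by (auto simp: stab_set_def eigenpair_def spec_radius_eq phase_vector_def)
qed

lemma stab_set_phases:
  assumes "y \<in> stab_set n E"
  obtains \<omega> where "\<omega> 0 = 1" "\<And>j. j < n \<Longrightarrow> y j = complex_of_real (x j / x 0) * \<omega> j"
    "\<And>i j k. {i, j, k} \<in> E \<Longrightarrow> \<omega> j * \<omega> k = (\<omega> i)\<^sup>2"
proof -
  have y: "eigenpair n E (complex_of_real r) y" "y 0 = 1"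
    using assms by (simp_all add: stab_set_def spec_radius_eq)
  obtain s \<omega> where s: "0 < s" "\<And>j. j < n \<Longrightarrow> cmod (\<omega> j) = 1"
      "\<And>j. j < n \<Longrightarrow> y j = complex_of_real (s * x j) * \<omega> j"
    and phases: "\<And>i j k. {i, j, k} \<in> E \<Longrightarrow> \<omega> j * \<omega> k = (\<omega> i)\<^sup>2"
    using eigenvector_phases[OF y(1)] by blast
  have y0: "complex_of_real (s * x 0) * \<omega> 0 = 1" using y(2) s(3)[OF n_pos] by simp
  moreover have "cmod (complex_of_real (s * x 0) * \<omega> 0) = s * x 0"
    using s(1,2) pos[OF n_pos] n_pos by (simp add: norm_mult)
  ultimately have "s * x 0 = 1" by simp
  then have "s = 1 / x 0" "\<omega> 0 = 1" using y0 pos[OF n_pos] by (simp_all add: field_simps)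
  then show ?thesis using that s(3) phases by simp
qed

lemma stab_set_eq: "stab_set n E = phase_vector ` {t. zero_sum_labelling n E t \<and> t 0 = 0}"
proof
  show "phase_vector ` {t. zero_sum_labelling n E t \<and> t 0 = 0} \<subseteq> stab_set n E"
    using phase_vector_in_stab_set by blast
next
  show "stab_set n E \<subseteq> phase_vector ` {t. zero_sum_labelling n E t \<and> t 0 = 0}"
  proof
    fix y assume y: "y \<in> stab_set n E"
    then obtain \<omega> where \<omega>0: "\<omega> 0 = 1"
      and y_eq: "\<And>j. j < n \<Longrightarrow> y j = complex_of_real (x j / x 0) * \<omega> j"
      and phases: "\<And>i j k. {i, j, k} \<in> E \<Longrightarrow> \<omega> j * \<omega> k = (\<omega> i)\<^sup>2"
      by (rule stab_set_phases) blast
    obtain t where t: "zero_sum_labelling n E t" "t 0 = 0" and \<omega>_eq: "\<And>j. j < n \<Longrightarrow> \<omega> j = zeta ^ t j"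
      using zeta_labelling_of_phases[of \<omega>, OF \<omega>0 phases] by blast
    have "y = phase_vector t"
    proof
      fix j show "y j = phase_vector t j"
        using y y_eq[of j] \<omega>_eq[of j]
        by (cases "j < n") (simp_all add: phase_vector_def stab_set_def eigenpair_def)
    qed
    with t show "y \<in> phase_vector ` {t. zero_sum_labelling n E t \<and> t 0 = 0}" by blast
  qed
qed

lemma inj_on_phase_vector: "inj_on phase_vector {t. zero_sum_labelling n E t}"
proof (rule inj_onI, rule ext)
  fix t t' j assume t: "t \<in> {t. zero_sum_labelling n E t}" "t' \<in> {t. zero_sum_labelling n E t}"
    and eq: "phase_vector t = phase_vector t'"
  show "t j = t' j"
  proof (cases "j < n")
    case True
    then have "zeta ^ t j = zeta ^ t' j"
      using fun_cong[OF eq, of j] pos[OF True] pos[OF n_pos] by (simp add: phase_vector_def)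
    then show ?thesis using t by (simp add: zeta_pow_eq_iff zero_sum_labelling_def)
  next
    case False
    then show ?thesis using t by (simp add: zero_sum_labelling_def)
  qed
qed

lemma card_stab_set: "card (stab_set n E) = card {t. zero_sum_labelling n E t \<and> t 0 = 0}"
  unfolding stab_set_eq by (rule card_image, rule inj_on_subset[OF inj_on_phase_vector]) auto

end

lemma Least_le_pow3_pos_iff: "0 < (LEAST k. c \<le> 3 ^ k) \<longleftrightarrow> 2 \<le> (c :: nat)"
proof
  assume "0 < (LEAST k. c \<le> 3 ^ k)"
  then have "\<not> c \<le> 3 ^ 0" using Least_eq_0[of "\<lambda>k. c \<le> 3 ^ k"] by auto
  then show "2 \<le> c" by simp
next
  assume "2 \<le> c"
  have "c < 2 ^ c" by (rule less_exp)
  also have "(2 :: nat) ^ c \<le> 3 ^ c" by (rule power_mono) simp_all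
  finally have "c \<le> 3 ^ c" by simp
  then have "c \<le> 3 ^ (LEAST k. c \<le> 3 ^ k)" by (rule LeastI)
  show "0 < (LEAST k. c \<le> 3 ^ k)"
  proof (rule ccontr)
    assume "\<not> 0 < (LEAST k. c \<le> 3 ^ k)"
    then have "c \<le> 3 ^ 0" using \<open>c \<le> 3 ^ (LEAST k. c \<le> 3 ^ k)\<close> by simp
    then show False using \<open>2 \<le> c\<close> by simp
  qed
qed

lemma two_le_card_iff:
  assumes "finite A" "a \<in> A"
  shows "2 \<le> card A \<longleftrightarrow> (\<exists>b\<in>A. b \<noteq> a)"
proof -
  have "2 \<le> card A \<longleftrightarrow> \<not> card A \<le> Suc 0" by linarith
  also have "\<dots> \<longleftrightarrow> (\<exists>b\<in>A. b \<noteq> a)"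
    using card_le_Suc0_iff_eq[OF assms(1)] assms(2) by metis
  finally show ?thesis .
qed

lemma (in perron_pair) stab_dim_pos_iff:
  "0 < stab_dim n E \<longleftrightarrow> (\<exists>t. zero_sum_labelling n E t \<and> t 0 = 0 \<and> t \<noteq> (\<lambda>_. 0))"
proof -
  let ?L = "{t. zero_sum_labelling n E t \<and> t 0 = 0}"
  have "finite ?L" by (rule finite_subset[OF _ finite_zero_sum_labellings]) auto
  moreover have "(\<lambda>_. 0) \<in> ?L" by (simp add: zero_sum_labelling_def)
  ultimately have "2 \<le> card ?L \<longleftrightarrow> (\<exists>t\<in>?L. t \<noteq> (\<lambda>_. 0))" by (rule two_le_card_iff)
  then show ?thesis unfolding stab_dim_def card_stab_set Least_le_pow3_pos_iff by auto
qed

theorem proposition4p7: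
  fixes n :: nat and E :: "nat set set"
  assumes "uniform3 n E" and "hg_connected n E"
  shows "stab_dim n E > 0 \<longleftrightarrow>
    (\<exists>V0 V1 V2. V0 \<noteq> {} \<and> V1 \<noteq> {} \<and> V2 \<noteq> {} \<and>
       V0 \<inter> V1 = {} \<and> V0 \<inter> V2 = {} \<and> V1 \<inter> V2 = {} \<and>
       V0 \<union> V1 \<union> V2 = {0..<n} \<and>
       (\<forall>e\<in>E. (e \<subseteq> V0 \<or> e \<subseteq> V1 \<or> e \<subseteq> V2) \<or>
               (e \<inter> V0 \<noteq> {} \<and> e \<inter> V1 \<noteq> {} \<and> e \<inter> V2 \<noteq> {})))"
proof -
  interpret connected_hypergraph3 n E
    using assms by unfold_locales
  obtain x r where "perron_pair n E x r"
    using perron_pair_exists by blast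
  then interpret perron_pair n E x r .
  show ?thesis
    using stab_dim_pos_iff nonconstant_labelling_iff_normalized nonconstant_labelling_iff_tripartition
    by (simp add: tripartition_def)
qed

end
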